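(* Let $M\ge1$ be an integer and for $j=0,\ldots,M-1$ let $f_j:\mathbb{Z}_M\to\mathbb{Z}_2$ be the Grover function $f_j(x)=\delta_{xj}$. Then the standard oracle operators $U_{f_0},\ldots,U_{f_{M-1}}$ are unambiguously distinguishable; indeed the matrix $\Gamma$ with $\Gamma_{j'j}=\#\{x\in\mathbb{Z}_M: f_{j'}(x)=f_j(x)\}$ satisfies $\det\Gamma=2^{M-1}[(M-1)^2+1]>0$.
   Context: Let $\mathcal{H}_M,\mathcal{H}_2$ be Hilbert spaces with orthonormal computational bases $\{|x\rangle\}_{x\in\mathbb{Z}_M}$, $\{|y\rangle\}_{y\in\mathbb{Z}_2}$. For $f:\mathbb{Z}_M\to\mathbb{Z}_2$ the standard oracle operator is the unitary $U_f$ on $\mathcal{H}_M\otimes\mathcal{H}_2$ with $U_f|x\rangle\otimes|y\rangle=|x\rangle\otimes|y\oplus f(x)\rangle$, $\oplus$ being addition mod 2. A finite list of unitary operators $W_1,\ldots,W_K$ on a finite-dimensional Hilbert space $\mathcal{H}$ is called unambiguously distinguishable if there exist a finite-dimensional ancilla space $\mathcal{H}_A$ and a unit vector $|\psi\rangle\in\mathcal{H}\otimes\mathcal{H}_A$ such that the vectors $(W_j\otimes\mathbb{1}_A)|\psi\rangle$ are linearly independent. *)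

theory Defs
  imports "Jordan_Normal_Form.Determinant"
begin

text \<open>The computational basis vector |x> (x) |y> of
  H_M (x) H_2 is the basis vector with index 2*x + y; a basis vector |i> (x) |a> of
  H (x) H_A (dim H = n, dim H_A = d) has index i*d + a.\<close>

definition conj_transpose :: "complex mat \<Rightarrow> complex mat" where
  "conj_transpose W = mat (dim_col W) (dim_row W) (\<lambda>(i,j). cnj (W $$ (j,i)))"

definition unitary_op :: "nat \<Rightarrow> complex mat \<Rightarrow> bool" where
  "unitary_op n W \<longleftrightarrow> W \<in> carrier_mat n n \<and> W * conj_transpose W = 1\<^sub>m n
      \<and> conj_transpose W * W = 1\<^sub>m n"

definition tensor_id :: "complex mat \<Rightarrow> nat \<Rightarrow> complex mat" where
  "tensor_id W d = mat (dim_row W * d) (dim_col W * d)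
     (\<lambda>(i,j). if i mod d = j mod d then W $$ (i div d, j div d) else 0)"

definition unit_vector :: "nat \<Rightarrow> complex vec \<Rightarrow> bool" where
  "unit_vector N v \<longleftrightarrow> v \<in> carrier_vec N \<and> (\<Sum>i<N. (cmod (v $ i))\<^sup>2) = 1"

definition lin_indep_list :: "nat \<Rightarrow> complex vec list \<Rightarrow> bool" where
  "lin_indep_list N vs \<longleftrightarrow>
     (\<forall>c :: nat \<Rightarrow> complex.
        (\<forall>i<N. (\<Sum>j<length vs. c j * (vs ! j) $ i) = 0) \<longrightarrow> (\<forall>j<length vs. c j = 0))"

definition unamb_distinguishable :: "nat \<Rightarrow> complex mat list \<Rightarrow> bool" where
  "unamb_distinguishable n Ws \<longleftrightarrow>
     (\<exists>d::nat. d > 0 \<and> (\<exists>\<psi>. unit_vector (n * d) \<psi> \<and>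
        lin_indep_list (n * d) (map (\<lambda>W. tensor_id W d *\<^sub>v \<psi>) Ws)))"

text \<open>Standard oracle U_f on H_M (x) H_2 for f : Z_M \<rightarrow> Z_2 (values 0/1 as nat):
  U_f |x>|y> = |x>|y xor f x>.\<close>
definition oracle_op :: "nat \<Rightarrow> (nat \<Rightarrow> nat) \<Rightarrow> complex mat" where
  "oracle_op M f = mat (2 * M) (2 * M)
     (\<lambda>(i,j). if i div 2 = j div 2 \<and> i mod 2 = (j mod 2 + f (j div 2)) mod 2 then 1 else 0)"

definition grover :: "nat \<Rightarrow> nat \<Rightarrow> nat" where
  "grover j x = (if x = j then 1 else 0)"

definition gram_count :: "nat \<Rightarrow> int mat" where
  "gram_count M = mat M M (\<lambda>(j',j). int (card {x. x < M \<and> grover j' x = grover j x}))"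

end

theory Submission
  imports Defs
begin

text \<open>U_f permutes the computational basis by the involution |x,y\<rangle> \<mapsto> |x, y \<oplus> f x\<rangle>, so it
  is a real symmetric permutation matrix squaring to the identity, hence unitary.
  No ancilla is needed to distinguish the Grover oracles: for the probe
  \<psi> = (1 / sqrt M) \<Sum>x. |x,0\<rangle>, the oracle U_(f_j) flips only the j-th term to |j,1\<rangle>,
  so the coordinate |j,1\<rangle> detects the j-th image vector and no other one.
  Finally \<Gamma> = 2 I + (M - 2) J, and subtracting the first column from the others and then
  adding all rows to the first one makes it lower triangular with diagonal
  2 + M (M - 2), 2, ..., 2.\<close>

definition oracle_perm :: "(nat \<Rightarrow> nat) \<Rightarrow> nat \<Rightarrow> nat" where
  "oracle_perm f i = 2 * (i div 2) + (i mod 2 + f (i div 2)) mod 2"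

lemma oracle_perm_less:
  assumes "i < 2 * M"
  shows "oracle_perm f i < 2 * M"
proof -
  have "i div 2 < M" "(i mod 2 + f (i div 2)) mod 2 < 2"
    using assms by simp_all
  then show ?thesis
    unfolding oracle_perm_def by linarith
qed

lemma oracle_perm_involution: "oracle_perm f (oracle_perm f i) = i"
proof -
  have "((i mod 2 + f (i div 2)) mod 2 + f (i div 2)) mod 2 = i mod 2"
    by (simp add: mod_add_left_eq add.assoc flip: mult_2)
  then show ?thesis
    by (simp add: oracle_perm_def)
qed

lemma dim_oracle_op: "dim_row (oracle_op M f) = 2 * M" "dim_col (oracle_op M f) = 2 * M"
  by (simp_all add: oracle_op_def)

lemma oracle_op_carrier: "oracle_op M f \<in> carrier_mat (2 * M) (2 * M)"
  by (simp add: carrier_matI dim_oracle_op)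

lemma oracle_op_entry:
  assumes "i < 2 * M" "j < 2 * M"
  shows "oracle_op M f $$ (i, j) = (if i = oracle_perm f j then 1 else 0)"
proof -
  have "i = oracle_perm f j \<longleftrightarrow> i div 2 = j div 2 \<and> i mod 2 = (j mod 2 + f (j div 2)) mod 2"
  proof
    assume "i = oracle_perm f j"
    then show "i div 2 = j div 2 \<and> i mod 2 = (j mod 2 + f (j div 2)) mod 2"
      by (simp add: oracle_perm_def)
  next
    assume "i div 2 = j div 2 \<and> i mod 2 = (j mod 2 + f (j div 2)) mod 2"
    then show "i = oracle_perm f j"
      unfolding oracle_perm_def by (metis div_mult_mod_eq mult.commute)
  qed
  then show ?thesis
    using assms by (simp add: oracle_op_def)
qed

lemma oracle_op_mult_vec:
  assumes "v \<in> carrier_vec (2 * M)" "i < 2 * M"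
  shows "(oracle_op M f *\<^sub>v v) $ i = v $ oracle_perm f i"
proof -
  have "(oracle_op M f *\<^sub>v v) $ i = (\<Sum>k<2 * M. (if i = oracle_perm f k then 1 else 0) * v $ k)"
    using assms by (simp add: scalar_prod_def oracle_op_entry atLeast0LessThan dim_oracle_op)
  also have "\<dots> = (\<Sum>k<2 * M. if k = oracle_perm f i then v $ k else 0)"
    by (rule sum.cong) (auto simp: oracle_perm_involution)
  also have "\<dots> = v $ oracle_perm f i"
    using assms by (simp add: oracle_perm_less)
  finally show ?thesis .
qed

lemma conj_transpose_oracle_op: "conj_transpose (oracle_op M f) = oracle_op M f"
proof (rule eq_matI)
  fix i j assume "i < dim_row (oracle_op M f)" "j < dim_col (oracle_op M f)"
  then have ij: "i < 2 * M" "j < 2 * M"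
    by (simp_all add: oracle_op_def)
  have "i = oracle_perm f j \<longleftrightarrow> j = oracle_perm f i"
    by (metis oracle_perm_involution)
  then show "conj_transpose (oracle_op M f) $$ (i, j) = oracle_op M f $$ (i, j)"
    using ij by (simp add: conj_transpose_def dim_oracle_op oracle_op_entry)
qed (simp_all add: conj_transpose_def oracle_op_def)

lemma oracle_op_mult_self: "oracle_op M f * oracle_op M f = 1\<^sub>m (2 * M)"
proof (rule eq_matI)
  fix i j assume "i < dim_row (1\<^sub>m (2 * M) :: complex mat)" "j < dim_col (1\<^sub>m (2 * M) :: complex mat)"
  then have ij: "i < 2 * M" "j < 2 * M"
    by simp_all
  have "(oracle_op M f * oracle_op M f) $$ (i, j) = (oracle_op M f *\<^sub>v col (oracle_op M f) j) $ i"
    using ij by (simp add: dim_oracle_op)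
  also have "\<dots> = col (oracle_op M f) j $ oracle_perm f i"
    using ij by (intro oracle_op_mult_vec) (simp_all add: carrier_vecI dim_oracle_op)
  also have "\<dots> = 1\<^sub>m (2 * M) $$ (i, j)"
    using ij by (simp add: dim_oracle_op oracle_op_entry oracle_perm_less)
      (metis oracle_perm_involution)
  finally show "(oracle_op M f * oracle_op M f) $$ (i, j) = 1\<^sub>m (2 * M) $$ (i, j)" .
qed (simp_all add: oracle_op_def)

lemma unitary_oracle_op: "unitary_op (2 * M) (oracle_op M f)"
  unfolding unitary_op_def conj_transpose_oracle_op oracle_op_mult_self
  by (simp add: oracle_op_carrier)

lemma tensor_id_1: "tensor_id W 1 = W"
  by (rule eq_matI) (simp_all add: tensor_id_def)

lemma unamb_distinguishable_without_ancilla: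
  assumes "unit_vector n \<psi>" "lin_indep_list n (map (\<lambda>W. W *\<^sub>v \<psi>) Ws)"
  shows "unamb_distinguishable n Ws"
  unfolding unamb_distinguishable_def
  using assms by (intro exI[of _ 1] conjI exI[of _ \<psi>]) (simp_all add: tensor_id_1[unfolded One_nat_def])

lemma lin_indep_list_diagonal_witness:
  assumes "\<And>k. k < length vs \<Longrightarrow> p k < N"
    and "\<And>j k. j < length vs \<Longrightarrow> k < length vs \<Longrightarrow> j \<noteq> k \<Longrightarrow> (vs ! j) $ p k = 0"
    and "\<And>k. k < length vs \<Longrightarrow> (vs ! k) $ p k \<noteq> 0"
  shows "lin_indep_list N vs"
  unfolding lin_indep_list_def
proof (intro allI impI)
  fix c :: "nat \<Rightarrow> complex" and k
  assume combination_zero: "\<forall>i<N. (\<Sum>j<length vs. c j * (vs ! j) $ i) = 0"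
    and k: "k < length vs"
  have "0 = (\<Sum>j<length vs. c j * (vs ! j) $ p k)"
    using combination_zero assms(1)[OF k] by simp
  also have "\<dots> = (\<Sum>j<length vs. if j = k then c k * (vs ! k) $ p k else 0)"
    using assms(2) k by (intro sum.cong) auto
  also have "\<dots> = c k * (vs ! k) $ p k"
    using k by simp
  finally show "c k = 0"
    using assms(3)[OF k] by simp
qed

definition uniform_zero_state :: "nat \<Rightarrow> complex vec" where
  "uniform_zero_state M = vec (2 * M) (\<lambda>i. if even i then complex_of_real (1 / sqrt M) else 0)"

lemma unit_vector_uniform_zero_state:
  assumes "M > 0"
  shows "unit_vector (2 * M) (uniform_zero_state M)"
proof -
  have "(\<Sum>i<2 * M. (cmod (uniform_zero_state M $ i))\<^sup>2) = (\<Sum>i<2 * M. if even i then 1 / real M else 0)"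
    by (rule sum.cong) (simp_all add: uniform_zero_state_def power_divide norm_divide)
  also have "\<dots> = real M * (1 / real M)"
  proof -
    have "(\<Sum>i<2 * n. if even i then c else 0) = real n * c" for n and c :: real
      by (induction n) (simp_all add: algebra_simps)
    then show ?thesis .
  qed
  also have "\<dots> = 1"
    using assms by simp
  finally show ?thesis
    unfolding unit_vector_def by (simp add: uniform_zero_state_def)
qed

lemma grover_oracle_uniform_zero_state:
  assumes "j < M" "k < M"
  shows "(oracle_op M (grover j) *\<^sub>v uniform_zero_state M) $ (2 * k + 1)
    = (if k = j then complex_of_real (1 / sqrt M) else 0)"
proof -
  have "2 * k + 1 < 2 * M"
    using assms by simp
  then have "(oracle_op M (grover j) *\<^sub>v uniform_zero_state M) $ (2 * k + 1)
      = uniform_zero_state M $ oracle_perm (grover j) (2 * k + 1)"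
    by (intro oracle_op_mult_vec) (simp add: uniform_zero_state_def)
  also have "\<dots> = (if k = j then complex_of_real (1 / sqrt M) else 0)"
    using assms by (simp add: uniform_zero_state_def oracle_perm_def grover_def)
  finally show ?thesis .
qed

lemma grover_oracles_unamb_distinguishable:
  assumes "M > 0"
  shows "unamb_distinguishable (2 * M) (map (\<lambda>j. oracle_op M (grover j)) [0..<M])"
proof (rule unamb_distinguishable_without_ancilla)
  show "unit_vector (2 * M) (uniform_zero_state M)"
    using assms by (rule unit_vector_uniform_zero_state)
  show "lin_indep_list (2 * M)
      (map (\<lambda>W. W *\<^sub>v uniform_zero_state M) (map (\<lambda>j. oracle_op M (grover j)) [0..<M]))"
    by (rule lin_indep_list_diagonal_witness[where p = "\<lambda>k. 2 * k + 1"])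
      (use assms grover_oracle_uniform_zero_state in auto)
qed

definition subtract_first_col_mat :: "nat \<Rightarrow> 'a :: comm_ring_1 mat" where
  "subtract_first_col_mat n = mat n n (\<lambda>(i,j). if i = j then 1 else if i = 0 then -1 else 0)"

definition add_rows_to_first_mat :: "nat \<Rightarrow> 'a :: comm_ring_1 mat" where
  "add_rows_to_first_mat n = mat n n (\<lambda>(i,j). if i = j \<or> i = 0 then 1 else 0)"

lemma det_unit_upper_triangular:
  assumes "A \<in> carrier_mat n n" "upper_triangular A" "\<And>i. i < n \<Longrightarrow> A $$ (i, i) = 1"
  shows "det A = 1"
  using assms by (simp add: det_upper_triangular[of _ n] prod_list_diag_prod)

lemma det_subtract_first_col_mat: "det (subtract_first_col_mat n) = 1"
  by (rule det_unit_upper_triangular[of _ n])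
    (auto simp: subtract_first_col_mat_def upper_triangular_def)

lemma det_add_rows_to_first_mat: "det (add_rows_to_first_mat n) = 1"
  by (rule det_unit_upper_triangular[of _ n])
    (auto simp: add_rows_to_first_mat_def upper_triangular_def)

lemma mult_subtract_first_col_mat:
  assumes "A \<in> carrier_mat n n"
  shows "A * subtract_first_col_mat n =
    mat n n (\<lambda>(i,j). if j = 0 then A $$ (i, 0) else A $$ (i, j) - A $$ (i, 0))" (is "_ = ?R")
proof (rule eq_matI)
  fix i j assume "i < dim_row ?R" "j < dim_col ?R"
  then have ij: "i < n" "j < n"
    by simp_all
  have "(A * subtract_first_col_mat n) $$ (i, j)
      = (\<Sum>k<n. A $$ (i, k) * (if k = j then 1 else if k = 0 then -1 else 0))"
    using assms ij by (simp add: subtract_first_col_mat_def scalar_prod_def lessThan_atLeast0)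
  also have "\<dots> = (\<Sum>k<n. (if k = j then A $$ (i, k) else 0)
      - (if k = 0 \<and> j \<noteq> 0 then A $$ (i, k) else 0))"
    by (rule sum.cong) auto
  also have "\<dots> = ?R $$ (i, j)"
    using ij by (simp add: sum_subtractf)
  finally show "(A * subtract_first_col_mat n) $$ (i, j) = ?R $$ (i, j)" .
qed (use assms in \<open>auto simp: subtract_first_col_mat_def\<close>)

lemma add_rows_to_first_mat_mult:
  assumes "A \<in> carrier_mat n n"
  shows "add_rows_to_first_mat n * A =
    mat n n (\<lambda>(i,j). if i = 0 then (\<Sum>k<n. A $$ (k, j)) else A $$ (i, j))" (is "_ = ?R")
proof (rule eq_matI)
  fix i j assume "i < dim_row ?R" "j < dim_col ?R"
  then have ij: "i < n" "j < n"
    by simp_all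
  have "(add_rows_to_first_mat n * A) $$ (i, j)
      = (\<Sum>k<n. (if i = k \<or> i = 0 then 1 else 0) * A $$ (k, j))"
    using assms ij by (simp add: add_rows_to_first_mat_def scalar_prod_def lessThan_atLeast0)
  also have "\<dots> = (\<Sum>k<n. if i = k \<or> i = 0 then A $$ (k, j) else 0)"
    by (rule sum.cong) auto
  also have "\<dots> = ?R $$ (i, j)"
    using ij by (cases "i = 0") simp_all
  finally show "(add_rows_to_first_mat n * A) $$ (i, j) = ?R $$ (i, j)" .
qed (use assms in \<open>auto simp: add_rows_to_first_mat_def\<close>)

lemma diag_plus_const_elimination:
  fixes a b :: "'a :: comm_ring_1"
  assumes "n > 0"
  shows "add_rows_to_first_mat n * (mat n n (\<lambda>(i,j). if i = j then a + b else b) * subtract_first_col_mat n)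
    = mat n n (\<lambda>(i,j). if i = 0 then (if j = 0 then a + of_nat n * b else 0)
        else if j = 0 then b else if i = j then a else 0)"
proof -
  obtain m where n: "n = Suc m"
    using assms gr0_conv_Suc by blast
  have "mat n n (\<lambda>(i,j). if i = j then a + b else b) * subtract_first_col_mat n
    = mat n n (\<lambda>(i,j). if j = 0 then (if i = 0 then a + b else b)
        else (if i = j then a else 0) - (if i = 0 then a else 0))" (is "_ = ?B")
    by (subst mult_subtract_first_col_mat) (auto intro!: eq_matI)
  moreover have "(\<Sum>k<n. ?B $$ (k, j)) = (if j = 0 then a + of_nat n * b else 0)" if "j < n" for j
  proof -
    have "(\<Sum>k<n. ?B $$ (k, j)) = (\<Sum>k<n. if j = 0 then (if k = 0 then a + b else b)
        else (if k = j then a else 0) - (if k = 0 then a else 0))"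
      using that by (intro sum.cong) auto
    also have "\<dots> = (if j = 0 then a + of_nat n * b else 0)"
    proof (cases "j = 0")
      case True
      show ?thesis
        unfolding True n sum.lessThan_Suc_shift by (simp add: algebra_simps)
    next
      case False
      with that show ?thesis
        by (simp add: sum_subtractf)
    qed
    finally show ?thesis .
  qed
  ultimately show ?thesis
    by (simp add: add_rows_to_first_mat_mult[OF mat_carrier]) (auto intro!: eq_matI)
qed

lemma det_diag_plus_const:
  fixes a b :: "'a :: comm_ring_1"
  assumes "n > 0"
  shows "det (mat n n (\<lambda>(i,j). if i = j then a + b else b)) = a ^ (n - 1) * (a + of_nat n * b)"
proof -
  obtain m where n: "n = Suc m"
    using assms gr0_conv_Suc by blast
  define A where "A = mat n n (\<lambda>(i,j). if i = j then a + b else b)"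
  define L where "L = mat n n (\<lambda>(i,j). if i = 0 then (if j = 0 then a + of_nat n * b else 0)
      else if j = 0 then b else if i = j then a else 0)"
  have A: "A \<in> carrier_mat n n" and E: "subtract_first_col_mat n \<in> carrier_mat n n"
    and F: "add_rows_to_first_mat n \<in> carrier_mat n n"
    by (simp_all add: A_def subtract_first_col_mat_def add_rows_to_first_mat_def)
  have "det A = det (add_rows_to_first_mat n * (A * subtract_first_col_mat n))"
    unfolding det_mult[OF F mult_carrier_mat[OF A E]] det_mult[OF A E]
    by (simp add: det_subtract_first_col_mat det_add_rows_to_first_mat)
  also have "\<dots> = det L"
    unfolding A_def L_def diag_plus_const_elimination[OF assms] ..
  also have "\<dots> = (\<Prod>i<n. L $$ (i, i))"
    by (subst det_lower_triangular[of n])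
      (simp_all add: L_def prod_list_diag_prod lessThan_atLeast0)
  also have "\<dots> = (a + of_nat n * b) * a ^ (n - 1)"
    unfolding n prod.lessThan_Suc_shift by (simp add: L_def n del: prod.lessThan_Suc)
  finally show ?thesis
    by (simp add: A_def mult.commute)
qed

lemma card_grover_agree:
  assumes "i < M" "j < M"
  shows "card {x. x < M \<and> grover i x = grover j x} = (if i = j then M else M - 2)"
proof (cases "i = j")
  case True
  then show ?thesis
    by simp
next
  case False
  then have "{x. x < M \<and> grover i x = grover j x} = {..<M} - {i, j}"
    by (auto simp: grover_def)
  with assms False show ?thesis
    by (simp add: card_Diff_subset)
qed

lemma gram_count_eq_diag_plus_const:
  "gram_count M = mat M M (\<lambda>(i,j). if i = j then 2 + (int M - 2) else int M - 2)" (is "_ = ?R")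
proof (rule eq_matI)
  fix i j assume "i < dim_row ?R" "j < dim_col ?R"
  then have ij: "i < M" "j < M"
    by simp_all
  moreover have "i \<noteq> j \<Longrightarrow> M \<ge> 2"
    using ij by linarith
  ultimately show "gram_count M $$ (i, j) = ?R $$ (i, j)"
    by (simp add: gram_count_def card_grover_agree of_nat_diff)
qed (simp_all add: gram_count_def)

lemma det_gram_count:
  assumes "M > 0"
  shows "det (gram_count M) = 2 ^ (M - 1) * ((int M - 1)\<^sup>2 + 1)"
proof -
  have "det (gram_count M) = 2 ^ (M - 1) * (2 + int M * (int M - 2))"
    unfolding gram_count_eq_diag_plus_const det_diag_plus_const[OF assms] by simp
  also have "2 + int M * (int M - 2) = (int M - 1)\<^sup>2 + 1"
    by (simp add: power2_eq_square algebra_simps)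
  finally show ?thesis .
qed

theorem mainTheorem6:
  fixes M :: nat
  assumes "M \<ge> 1"
  shows "(\<forall>j<M. unitary_op (2 * M) (oracle_op M (grover j)))
    \<and> unamb_distinguishable (2 * M) (map (\<lambda>j. oracle_op M (grover j)) [0..<M])
    \<and> det (gram_count M) = 2 ^ (M - 1) * ((int M - 1)\<^sup>2 + 1)
    \<and> det (gram_count M) > 0"
proof -
  have M: "M > 0"
    using assms by simp
  have "(0::int) < 2 ^ (M - 1) * ((int M - 1)\<^sup>2 + 1)"
    by (simp add: add_nonneg_pos)
  then show ?thesis
    using unitary_oracle_op grover_oracles_unamb_distinguishable[OF M] det_gram_count[OF M]
    by simp
qed

end
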